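(* Assume (H1), (H2.1)–(H2.4), (H3.1), (H3.2) and (H3.3). Then $\|\widehat{T}_{N}-T|_{\widehat{X}}\|_{\widehat{X}\leftarrow\widehat{X}}\to 0$ as $N\to\infty$.
   Context: Let $d\ge 1$ be an integer and $\tau>0$, $h\ge\tau$ real. $X$, $X^{+}$, $X^{\pm}$ are real normed spaces of functions $[-\tau,0]\to\mathbb{R}^{d}$, $[0,h]\to\mathbb{R}^{d}$, $[-\tau,h]\to\mathbb{R}^{d}$, respectively. For a function $u$ on $[-\tau,h]$, $u_{h}(\theta):=u(h+\theta)$, $\theta\in[-\tau,0]$. $V\colon X\times X^{+}\to X^{\pm}$ and $\mathcal{F}_{s}\colon X^{\pm}\to X^{+}$ are linear with $V(\phi,z)|_{[-\tau,0]}=\phi$; $V^{-}\phi:=V(\phi,0_{X^{+}})$, $V^{+}z:=V(0_{X},z)$. The operator $T\colon X\to X$ is $T\phi:=V(\phi,z^{\ast})_{h}$, where $z^{\ast}\in X^{+}$ is the unique solution of $z=\mathcal{F}_{s}V(\phi,z)$. Let $\widetilde{X}^{+}\subseteq X^{+}$ be a linear subspace; for $N\in\mathbb{N}$, $X_{N}^{+}$ is finite-dimensional, $R_{N}^{+}\colon\widetilde{X}^{+}\to X_{N}^{+}$, $P_{N}^{+}\colon X_{N}^{+}\to X^{+}$ are linear with $R_{N}^{+}P_{N}^{+}=I_{X_{N}^{+}}$, $\mathcal{L}_{N}^{+}:=P_{N}^{+}R_{N}^{+}$, and $\Pi_{N}^{+}$ is the range of $P_{N}^{+}$. Hypotheses: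 (H1) $I_{X^{+}}-\mathcal{F}_{s}V^{+}$ is invertible on $X^{+}$ with bounded inverse and for each $\phi\in X$ the equation $z=\mathcal{F}_{s}V(\phi,z)$ has a unique solution in $X^{+}$. There is a linear subspace $\widehat{X}^{+}\subseteq\widetilde{X}^{+}$ with a norm $\|\cdot\|_{\widehat{X}^{+}}$ making it complete such that: (H2.1) $\|(\mathcal{L}_{N}^{+}-I_{X^{+}})|_{\widehat{X}^{+}}\|_{X^{+}\leftarrow\widehat{X}^{+}}\to 0$ as $N\to\infty$; (H2.2) $\Pi_{N}^{+}\subseteq\widehat{X}^{+}$ for all $N$; (H2.3) there is $\hat{c}_{1}>0$ with $\|\cdot\|_{X^{+}}\le\hat{c}_{1}\|\cdot\|_{\widehat{X}^{+}}$ on $\widehat{X}^{+}$; (H2.4) the range of $\mathcal{F}_{s}V^{+}$ is contained in $\widehat{X}^{+}$ and $\mathcal{F}_{s}V^{+}\colon X^{+}\to\widehat{X}^{+}$ is bounded. There is a linear subspace $\widehat{X}\subseteq X$ with a norm $\|\cdot\|_{\widehat{X}}$ making it complete such that: (H3.1) $\mathcal{F}_{s}V^{-}$ maps $\widehat{X}$ into $\widehat{X}^{+}$ and $\mathcal{F}_{s}V^{-}|_{\widehat{X}}\colon\widehat{X}\to\widehat{X}^{+}$ is bounded; (H3.2) $V(\phi,z)_{h}\in\widehat{X}$ for all $(\phi,z)\in\widehat{X}\times\widehat{X}^{+}$; (H3.3) there is $\hat{c}_{2}>0$ with $\|(V^{+}z)_{h}\|_{\widehat{X}}\le\hat{c}_{2}\|z\|_{X^{+}}$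 for all $z\in\widehat{X}^{+}$. For $N$ large enough that $I_{X^{+}}-\mathcal{L}_{N}^{+}\mathcal{F}_{s}V^{+}$ is invertible on $X^{+}$, the operator $\widehat{T}_{N}\colon\widehat{X}\to\widehat{X}$ is $\widehat{T}_{N}\phi:=V(\phi,w^{\ast})_{h}$, where $w^{\ast}\in X^{+}$ is the unique solution of $z=\mathcal{L}_{N}^{+}\mathcal{F}_{s}V(\phi,z)$. *)

theory Defs
  imports "HOL-Analysis.Analysis"
begin

text \<open>Functions [a,b] -> R^d are represented as total functions real => real^'d
  that vanish outside [a,b] (canonical zero extension). Vector operations are pointwise.\<close>

type_synonym 'd fn = "real \<Rightarrow> real ^ 'd"

definition fzero :: "('d::finite) fn" where "fzero = (\<lambda>t. 0)"
definition fadd :: "('d::finite) fn \<Rightarrow> 'd fn \<Rightarrow> 'd fn" where "fadd u v = (\<lambda>t. u t + v t)"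
definition fscale :: "real \<Rightarrow> ('d::finite) fn \<Rightarrow> 'd fn" where "fscale c u = (\<lambda>t. c *\<^sub>R u t)"
definition fdiff :: "('d::finite) fn \<Rightarrow> 'd fn \<Rightarrow> 'd fn" where "fdiff u v = (\<lambda>t. u t - v t)"

definition lin_subspace :: "('d::finite) fn set \<Rightarrow> bool" where
  "lin_subspace S \<longleftrightarrow> fzero \<in> S \<and> (\<forall>u\<in>S. \<forall>v\<in>S. fadd u v \<in> S) \<and> (\<forall>c. \<forall>u\<in>S. fscale c u \<in> S)"

definition is_norm_on :: "('d::finite) fn set \<Rightarrow> ('d fn \<Rightarrow> real) \<Rightarrow> bool" where
  "is_norm_on S nrm \<longleftrightarrow>
     (\<forall>u\<in>S. 0 \<le> nrm u) \<and> (\<forall>u\<in>S. nrm u = 0 \<longleftrightarrow> u = fzero) \<and>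
     (\<forall>c. \<forall>u\<in>S. nrm (fscale c u) = \<bar>c\<bar> * nrm u) \<and>
     (\<forall>u\<in>S. \<forall>v\<in>S. nrm (fadd u v) \<le> nrm u + nrm v)"

definition fun_normed_space :: "real \<Rightarrow> real \<Rightarrow> ('d::finite) fn set \<Rightarrow> ('d fn \<Rightarrow> real) \<Rightarrow> bool" where
  "fun_normed_space a b S nrm \<longleftrightarrow>
     (\<forall>u\<in>S. \<forall>t. t \<notin> {a..b} \<longrightarrow> u t = 0) \<and> lin_subspace S \<and> is_norm_on S nrm"

definition complete_on :: "('d::finite) fn set \<Rightarrow> ('d fn \<Rightarrow> real) \<Rightarrow> bool" where
  "complete_on S nrm \<longleftrightarrow>
     (\<forall>x::nat \<Rightarrow> 'd fn. (\<forall>n. x n \<in> S) \<longrightarrow>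
        (\<forall>e>0. \<exists>M. \<forall>m\<ge>M. \<forall>n\<ge>M. nrm (fdiff (x m) (x n)) < e) \<longrightarrow>
        (\<exists>y\<in>S. (\<lambda>n. nrm (fdiff (x n) y)) \<longlonglongrightarrow> 0))"

definition lin_on :: "('d::finite) fn set \<Rightarrow> ('d fn \<Rightarrow> ('e::finite) fn) \<Rightarrow> bool" where
  "lin_on S L \<longleftrightarrow> (\<forall>u\<in>S. \<forall>v\<in>S. L (fadd u v) = fadd (L u) (L v)) \<and>
                   (\<forall>c. \<forall>u\<in>S. L (fscale c u) = fscale c (L u))"

definition maps_into :: "'a set \<Rightarrow> 'b set \<Rightarrow> ('a \<Rightarrow> 'b) \<Rightarrow> bool" where
  "maps_into S1 S2 L \<longleftrightarrow> (\<forall>x\<in>S1. L x \<in> S2)"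

definition bounded_op :: "'a set \<Rightarrow> ('a \<Rightarrow> real) \<Rightarrow> ('b \<Rightarrow> real) \<Rightarrow> ('a \<Rightarrow> 'b) \<Rightarrow> bool" where
  "bounded_op S1 n1 n2 L \<longleftrightarrow> (\<exists>K. \<forall>x\<in>S1. n2 (L x) \<le> K * n1 x)"

text \<open>Operator norm (meaningful for bounded operators).\<close>
definition op_norm :: "'a set \<Rightarrow> ('a \<Rightarrow> real) \<Rightarrow> ('b \<Rightarrow> real) \<Rightarrow> ('a \<Rightarrow> 'b) \<Rightarrow> real" where
  "op_norm S1 n1 n2 L = Sup ((\<lambda>x. n2 (L x)) ` {x\<in>S1. n1 x \<le> 1})"

text \<open>The operator norms of a sequence of operators tend to 0 (the operators being
  bounded for all large N, so that the norms are defined).\<close>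
definition op_norm_to_zero :: "'a set \<Rightarrow> ('a \<Rightarrow> real) \<Rightarrow> ('b \<Rightarrow> real) \<Rightarrow> (nat \<Rightarrow> 'a \<Rightarrow> 'b) \<Rightarrow> bool" where
  "op_norm_to_zero S1 n1 n2 L \<longleftrightarrow>
     eventually (\<lambda>N. bounded_op S1 n1 n2 (L N)) sequentially \<and>
     (\<lambda>N. op_norm S1 n1 n2 (L N)) \<longlonglongrightarrow> 0"

definition shift :: "real \<Rightarrow> real \<Rightarrow> ('d::finite) fn \<Rightarrow> 'd fn" where
  "shift tau h u = (\<lambda>\<theta>. if \<theta> \<in> {-tau..0} then u (h + \<theta>) else 0)"

definition opT :: "real \<Rightarrow> real \<Rightarrow> ('d::finite) fn set \<Rightarrow> ('d fn \<Rightarrow> 'd fn \<Rightarrow> 'd fn) \<Rightarrow> ('d fn \<Rightarrow> 'd fn)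
                   \<Rightarrow> 'd fn \<Rightarrow> 'd fn" where
  "opT tau h Xp V Fs \<phi> = shift tau h (V \<phi> (THE z. z \<in> Xp \<and> z = Fs (V \<phi> z)))"

definition opTN :: "real \<Rightarrow> real \<Rightarrow> ('d::finite) fn set \<Rightarrow> ('d fn \<Rightarrow> 'd fn \<Rightarrow> 'd fn) \<Rightarrow> ('d fn \<Rightarrow> 'd fn)
                   \<Rightarrow> ('d fn \<Rightarrow> 'd fn) \<Rightarrow> 'd fn \<Rightarrow> 'd fn" where
  "opTN tau h Xp V Fs LN \<phi> = shift tau h (V \<phi> (THE w. w \<in> Xp \<and> w = LN (Fs (V \<phi> w))))"

end

theory Submission
  imports Defs "HOL-Library.Function_Algebras"
begin

(* Write F_s V(phi, z) = B phi + A z with A = F_s V^+. The exact fixed point solves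
   (I - A) z = B phi and the collocation fixed point solves (I - L_N A) w = L_N B phi.
   Since (I - L_N A) - (I - A) = -(L_N - I) A has norm at most eps_N ||A||, with eps_N -> 0
   by (H2.1), the operators I - L_N A are eventually uniformly stable:
   ||e|| <= 2 ||(I - A)^-1|| ||(I - L_N A) e||. On the finite-dimensional range of P_N this
   gives unique solvability, and the error e = w - z satisfies (I - L_N A) e = (L_N - I) z,
   so ||e|| = O(eps_N ||z||_hat) = O(eps_N ||phi||_hat). Finally T_N phi - T phi = (V^+ e)_h,
   which (H3.3) bounds by c2 ||e||. *)

section \<open>Linear structure of the function spaces\<close>

lemma fadd_eq_plus [simp]: "fadd u v = u + v"
  and fdiff_eq_minus [simp]: "fdiff u v = u - v"
  and fzero_eq_zero [simp]: "fzero = 0"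
  by (auto simp: fadd_def fdiff_def fzero_def)

lemma fscale_diff [simp]: "fscale c (u - v) = fscale c u - fscale c v"
  and fscale_zero_left [simp]: "fscale 0 u = 0"
  and fscale_zero_right [simp]: "fscale c 0 = 0"
  and fscale_minus_one [simp]: "fscale (-1) u = - u"
  by (auto simp: fscale_def fun_eq_iff algebra_simps)

lemma lin_subspace_zero: "lin_subspace S \<Longrightarrow> 0 \<in> S"
  and lin_subspace_add: "lin_subspace S \<Longrightarrow> u \<in> S \<Longrightarrow> v \<in> S \<Longrightarrow> u + v \<in> S"
  and lin_subspace_scale: "lin_subspace S \<Longrightarrow> u \<in> S \<Longrightarrow> fscale c u \<in> S"
  by (simp_all add: lin_subspace_def)

lemma lin_subspace_diff: "lin_subspace S \<Longrightarrow> u \<in> S \<Longrightarrow> v \<in> S \<Longrightarrow> u - v \<in> S"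
  using lin_subspace_add[of S u "fscale (-1) v"] lin_subspace_scale[of S v "-1"] by simp

lemma is_norm_on_nonneg: "is_norm_on S n \<Longrightarrow> u \<in> S \<Longrightarrow> 0 \<le> n u"
  and is_norm_on_eq_zero: "is_norm_on S n \<Longrightarrow> u \<in> S \<Longrightarrow> n u = 0 \<Longrightarrow> u = 0"
  and is_norm_on_scale: "is_norm_on S n \<Longrightarrow> u \<in> S \<Longrightarrow> n (fscale c u) = \<bar>c\<bar> * n u"
  and is_norm_on_triangle: "is_norm_on S n \<Longrightarrow> u \<in> S \<Longrightarrow> v \<in> S \<Longrightarrow> n (u + v) \<le> n u + n v"
  by (simp_all add: is_norm_on_def)

lemma is_norm_on_zero: "is_norm_on S n \<Longrightarrow> lin_subspace S \<Longrightarrow> n 0 = 0"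
  using lin_subspace_zero by (fastforce simp: is_norm_on_def)

lemma lin_on_add: "lin_on S L \<Longrightarrow> u \<in> S \<Longrightarrow> v \<in> S \<Longrightarrow> L (u + v) = L u + L v"
  and lin_on_scale: "lin_on S L \<Longrightarrow> u \<in> S \<Longrightarrow> L (fscale c u) = fscale c (L u)"
  by (simp_all add: lin_on_def)

lemma lin_on_zero: "lin_on S L \<Longrightarrow> lin_subspace S \<Longrightarrow> L 0 = 0"
  using lin_on_scale[of S L 0 0] lin_subspace_zero[of S] by simp

lemma lin_on_diff: "lin_on S L \<Longrightarrow> lin_subspace S \<Longrightarrow> u \<in> S \<Longrightarrow> v \<in> S \<Longrightarrow> L (u - v) = L u - L v"
  using lin_on_add[of S L u "fscale (-1) v"] lin_on_scale[of S L v "-1"] lin_subspace_scale[of S v "-1"]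
  by simp

lemma lin_on_factor_through:
  fixes R :: "('d::finite) fn \<Rightarrow> 'n::real_vector" and P :: "'n \<Rightarrow> ('e::finite) fn"
  assumes "subspace M" and "\<forall>u\<in>S. R u \<in> M"
    and "\<forall>u\<in>S. \<forall>v\<in>S. R (u + v) = R u + R v" and "\<forall>c. \<forall>u\<in>S. R (fscale c u) = c *\<^sub>R R u"
    and "\<forall>x\<in>M. \<forall>y\<in>M. P (x + y) = P x + P y" and "\<forall>c. \<forall>x\<in>M. P (c *\<^sub>R x) = fscale c (P x)"
  shows "lin_on S (\<lambda>u. P (R u))"
  using assms by (auto simp: lin_on_def subspace_add subspace_scale)

lemma lin_on_minus_id: "lin_on S L \<Longrightarrow> lin_on S (\<lambda>u. L u - u)"
  by (simp add: lin_on_def)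

section \<open>Operator norms\<close>

lemma bounded_op_nonneg_bound:
  assumes "bounded_op S n1 n2 L" and "\<forall>x\<in>S. 0 \<le> n1 x"
  obtains K where "K \<ge> 0" and "\<forall>x\<in>S. n2 (L x) \<le> K * n1 x"
proof -
  obtain K where K: "\<forall>x\<in>S. n2 (L x) \<le> K * n1 x"
    using assms(1) by (auto simp: bounded_op_def)
  have "K * n1 x \<le> max K 0 * n1 x" if "x \<in> S" for x
    using assms(2) that by (intro mult_right_mono) auto
  with K show thesis
    by (intro that[of "max K 0"]) (auto intro: order.trans)
qed

lemma bounded_op_bdd_above:
  assumes "bounded_op S n1 n2 L" and "\<forall>x\<in>S. 0 \<le> n1 x"
  shows "bdd_above ((\<lambda>x. n2 (L x)) ` {x\<in>S. n1 x \<le> 1})"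
proof -
  obtain K where "K \<ge> 0" and K: "\<forall>x\<in>S. n2 (L x) \<le> K * n1 x"
    using bounded_op_nonneg_bound[OF assms] .
  then have "n2 (L x) \<le> K" if "x \<in> S" "n1 x \<le> 1" for x
    using that mult_left_mono[of "n1 x" 1 K] by (auto intro: order.trans)
  then show ?thesis
    by (intro bdd_aboveI[where M=K]) auto
qed

lemma op_norm_nonneg:
  assumes "bounded_op S n1 n2 L" and "\<forall>x\<in>S. 0 \<le> n1 x"
    and "0 \<in> S" and "n1 0 = 0" and "0 \<le> n2 (L 0)"
  shows "0 \<le> op_norm S n1 n2 L"
proof -
  have "n2 (L 0) \<le> op_norm S n1 n2 L"
    unfolding op_norm_def using assms bounded_op_bdd_above[OF assms(1,2)]
    by (intro cSup_upper) auto
  with assms(5) show ?thesis by linarith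
qed

lemma op_norm_bound:
  assumes S: "lin_subspace S" "is_norm_on S n1" and T: "lin_subspace T" "is_norm_on T n2"
    and L: "maps_into S T L" "lin_on S L" "bounded_op S n1 n2 L" and x: "x \<in> S"
  shows "n2 (L x) \<le> op_norm S n1 n2 L * n1 x"
proof (cases "n1 x = 0")
  case True
  then have "x = 0" using is_norm_on_eq_zero[OF S(2) x] by simp
  then show ?thesis using lin_on_zero[OF L(2) S(1)] is_norm_on_zero[OF T(2,1)] True by simp
next
  case False
  then have pos: "n1 x > 0" using is_norm_on_nonneg[OF S(2) x] by simp
  define y where "y = fscale (1 / n1 x) x"
  have y: "y \<in> S" using lin_subspace_scale[OF S(1) x] by (simp add: y_def)
  have "n1 y = 1" using is_norm_on_scale[OF S(2) x] pos by (simp add: y_def)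
  then have "n2 (L y) \<le> op_norm S n1 n2 L"
    unfolding op_norm_def using y bounded_op_bdd_above[OF L(3)] is_norm_on_nonneg[OF S(2)]
    by (intro cSup_upper) auto
  moreover have "n2 (L y) = n2 (L x) / n1 x"
    using lin_on_scale[OF L(2) x] is_norm_on_scale[OF T(2)] L(1) x pos
    by (simp add: y_def maps_into_def)
  ultimately show ?thesis using pos by (simp add: field_simps)
qed

lemma op_norm_le:
  assumes "0 \<in> S" and "n1 0 = 0" and "K \<ge> 0" and "\<forall>x\<in>S. n2 (L x) \<le> K * n1 x"
  shows "op_norm S n1 n2 L \<le> K"
  unfolding op_norm_def
proof (rule cSup_least)
  show "(\<lambda>x. n2 (L x)) ` {x \<in> S. n1 x \<le> 1} \<noteq> {}" using assms(1,2) by auto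
  have "K * n1 x \<le> K" if "n1 x \<le> 1" for x
    using mult_left_mono[OF that assms(3)] by simp
  then show "y \<le> K" if "y \<in> (\<lambda>x. n2 (L x)) ` {x \<in> S. n1 x \<le> 1}" for y
    using that assms(4) by force
qed

lemma op_norm_to_zeroI:
  assumes S: "lin_subspace S" "is_norm_on S n1" and T: "is_norm_on T n2" and K: "K \<longlonglongrightarrow> 0"
    and bound: "\<And>N. N \<ge> N0 \<Longrightarrow> 0 \<le> K N \<and> (\<forall>x\<in>S. L N x \<in> T \<and> n2 (L N x) \<le> K N * n1 x)"
  shows "op_norm_to_zero S n1 n2 L"
proof -
  have "eventually (\<lambda>N. bounded_op S n1 n2 (L N) \<and>
      0 \<le> op_norm S n1 n2 (L N) \<and> op_norm S n1 n2 (L N) \<le> K N) sequentially"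
    unfolding eventually_sequentially
  proof (intro exI[of _ N0] allI impI)
    fix N assume "N \<ge> N0"
    note bound_N = bound[OF this]
    then have "bounded_op S n1 n2 (L N)" by (auto simp: bounded_op_def)
    then show "bounded_op S n1 n2 (L N) \<and> 0 \<le> op_norm S n1 n2 (L N) \<and> op_norm S n1 n2 (L N) \<le> K N"
      using bound_N lin_subspace_zero[OF S(1)] is_norm_on_zero[OF S(2,1)]
        is_norm_on_nonneg[OF S(2)] is_norm_on_nonneg[OF T]
      by (auto intro!: op_norm_nonneg op_norm_le)
  qed
  then have "eventually (\<lambda>N. bounded_op S n1 n2 (L N)) sequentially"
    and "(\<lambda>N. op_norm S n1 n2 (L N)) \<longlonglongrightarrow> 0"
    by (auto elim: eventually_mono intro!: real_tendsto_sandwich[OF _ _ tendsto_const K])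
  then show ?thesis
    by (simp add: op_norm_to_zero_def)
qed

lemma op_norm_to_zero_eventually_small:
  assumes "op_norm_to_zero S n1 n2 L" and "r > 0"
  shows "eventually (\<lambda>N. bounded_op S n1 n2 (L N) \<and> op_norm S n1 n2 (L N) * K \<le> r) sequentially"
proof -
  have "(\<lambda>N. op_norm S n1 n2 (L N) * K) \<longlonglongrightarrow> 0"
    using assms(1) by (auto simp: op_norm_to_zero_def intro: tendsto_mult_left_zero)
  then have "eventually (\<lambda>N. op_norm S n1 n2 (L N) * K < r) sequentially"
    using assms(2) by (rule order_tendstoD(2))
  with assms(1) show ?thesis
    unfolding op_norm_to_zero_def by (auto elim: eventually_elim2)
qed

section \<open>Injective linear maps of finite-dimensional subspaces\<close>

lemma linear_extension_from_subspace:
  fixes g :: "'a::real_vector \<Rightarrow> 'b::real_vector"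
  assumes M: "subspace M"
    and add: "\<forall>x\<in>M. \<forall>y\<in>M. g (x + y) = g x + g y" and scale: "\<forall>c. \<forall>x\<in>M. g (c *\<^sub>R x) = c *\<^sub>R g x"
  obtains g' where "linear g'" and "\<forall>x\<in>M. g' x = g x"
proof -
  obtain C where C: "C \<subseteq> M" "independent C" "M \<subseteq> span C" "card C = dim M"
    by (rule basis_exists)
  obtain g' where g': "linear g'" "\<forall>x\<in>C. g' x = g x"
    using linear_independent_extend[OF C(2)] by blast
  have "g 0 = 0"
    using scale subspace_0[OF M] by (metis scale_zero_left)
  then have "subspace {x \<in> M. g' x = g x}"
    using M add scale g'(1) by (auto simp: subspace_def linear_0 linear_add linear_scale)
  then have "span C \<subseteq> {x \<in> M. g' x = g x}"
    using C(1) g'(2) by (intro span_minimal) auto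
  with C(3) g'(1) show thesis
    by (intro that[of g']) auto
qed

lemma linear_inj_on_finite_dim_imp_surj_on:
  fixes g :: "'a::real_vector \<Rightarrow> 'a"
  assumes g: "linear g" "g ` M \<subseteq> M" "inj_on g M" and B: "finite B" "span B = M"
  shows "g ` M = M"
proof -
  obtain C where C: "C \<subseteq> M" "independent C" "M \<subseteq> span C" "card C = dim M"
    by (rule basis_exists)
  have finC: "finite C"
    using independent_span_bound[OF B(1) C(2)] C(1) B(2) by auto
  have span_C: "span C = M"
    using C(1,3) B(2) span_minimal[of C M] by auto
  have gC: "independent (g ` C)" "card (g ` C) = card C" "g ` C \<subseteq> M"
    using real_vector.linear_independent_injective_image[OF g(1) C(2)] g(2,3) C(1) span_C
      card_image[OF inj_on_subset[OF g(3) C(1)]] by auto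
  have "M \<subseteq> span (g ` C)"
  proof
    fix v assume v: "v \<in> M"
    show "v \<in> span (g ` C)"
    proof (rule ccontr)
      assume nv: "v \<notin> span (g ` C)"
      then have indep: "independent (insert v (g ` C))"
        using gC(1) by (simp add: independent_insert)
      have "insert v (g ` C) \<subseteq> span C"
        using v gC(3) unfolding span_C by blast
      then have "card (insert v (g ` C)) \<le> card C"
        using independent_span_bound[OF finC indep] by auto
      moreover have "v \<notin> g ` C"
        using nv span_base[of v "g ` C"] by blast
      ultimately show False
        using gC(2) finC by simp
    qed
  qed
  also have "span (g ` C) = g ` M"
    using span_linear_image[OF g(1), of C] span_C by simp
  finally show ?thesis
    using g(2) by blast
qed

lemma linear_on_finite_dim_inj_imp_surj_on:
  fixes g :: "'a::real_vector \<Rightarrow> 'a"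
  assumes B: "finite B" "span B = M"
    and into: "\<forall>x\<in>M. g x \<in> M"
    and add: "\<forall>x\<in>M. \<forall>y\<in>M. g (x + y) = g x + g y" and scale: "\<forall>c. \<forall>x\<in>M. g (c *\<^sub>R x) = c *\<^sub>R g x"
    and kernel: "\<forall>x\<in>M. g x = 0 \<longrightarrow> x = 0"
  shows "g ` M = M"
proof -
  have M: "subspace M" using B(2) subspace_span by blast
  obtain g' where g': "linear g'" "\<forall>x\<in>M. g' x = g x"
    using linear_extension_from_subspace[OF M add scale] .
  have "inj_on g' M"
  proof (rule inj_onI)
    fix x y assume "x \<in> M" "y \<in> M" "g' x = g' y"
    then show "x = y"
      using g' kernel subspace_diff[OF M] by (metis linear_diff eq_iff_diff_eq_0)
  qed
  then have "g' ` M = M"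
    using linear_inj_on_finite_dim_imp_surj_on[OF g'(1) _ _ B] g'(2) into by auto
  then show ?thesis
    using g'(2) by (metis image_cong)
qed

section \<open>The abstract collocation equation\<close>

text \<open>The collocation equation for one fixed N, in abstract form: A stands for F_s V^+,
  G for the inverse of I - A, Y for the hat space of X^+, and P o R for the projection L_N^+.\<close>

locale projected_fixed_point =
  fixes Xp :: "('d::finite) fn set" and np :: "'d fn \<Rightarrow> real"
    and Y :: "'d fn set" and ny :: "'d fn \<Rightarrow> real"
    and A G :: "'d fn \<Rightarrow> 'd fn"
    and M :: "'n::real_vector set" and R :: "'d fn \<Rightarrow> 'n" and P :: "'n \<Rightarrow> 'd fn"
    and c1 KA KG :: real
  assumes Xp_subspace: "lin_subspace Xp" and Xp_norm: "is_norm_on Xp np"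
    and Y_subspace: "lin_subspace Y" and Y_norm: "is_norm_on Y ny" and Y_subset: "Y \<subseteq> Xp"
    and Y_norm_dominates: "\<forall>u\<in>Y. np u \<le> c1 * ny u"
    and A_lin: "lin_on Xp A" and A_into: "\<forall>z\<in>Xp. A z \<in> Y"
    and A_bound: "KA \<ge> 0" "\<forall>z\<in>Xp. ny (A z) \<le> KA * np z"
    and G_inverse: "\<forall>z\<in>Xp. G (z - A z) = z" "\<forall>y\<in>Xp. G y \<in> Xp \<and> G y - A (G y) = y"
    and G_bound: "KG \<ge> 0" "\<forall>y\<in>Xp. np (G y) \<le> KG * np y"
    and M_finite_dim: "subspace M" "\<exists>B. finite B \<and> span B = M"
    and R_into: "\<forall>u\<in>Y. R u \<in> M"
    and R_add: "\<forall>u\<in>Y. \<forall>v\<in>Y. R (u + v) = R u + R v"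
    and R_scale: "\<forall>c. \<forall>u\<in>Y. R (fscale c u) = c *\<^sub>R R u"
    and P_into: "\<forall>x\<in>M. P x \<in> Y"
    and P_add: "\<forall>x\<in>M. \<forall>y\<in>M. P (x + y) = P x + P y"
    and P_scale: "\<forall>c. \<forall>x\<in>M. P (c *\<^sub>R x) = fscale c (P x)"
    and R_P: "\<forall>x\<in>M. R (P x) = x"
    and projection_error_bounded: "bounded_op Y ny np (\<lambda>u. P (R u) - u)"
    and stability_margin: "op_norm Y ny np (\<lambda>u. P (R u) - u) * (KA * KG) \<le> 1/2"
begin

abbreviation \<epsilon> :: real where "\<epsilon> \<equiv> op_norm Y ny np (\<lambda>u. P (R u) - u)"

lemma projection_lin: "lin_on Y (\<lambda>u. P (R u))"
  using lin_on_factor_through[OF M_finite_dim(1) R_into R_add R_scale P_add P_scale] .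

lemma projection_into: "u \<in> Y \<Longrightarrow> P (R u) \<in> Y"
  using R_into P_into by blast

lemma projection_consistency: "0 \<le> \<epsilon>" "u \<in> Y \<Longrightarrow> np (P (R u) - u) \<le> \<epsilon> * ny u"
proof -
  have into: "maps_into Y Xp (\<lambda>u. P (R u) - u)"
    unfolding maps_into_def using projection_into Y_subset lin_subspace_diff[OF Xp_subspace] by blast
  show "u \<in> Y \<Longrightarrow> np (P (R u) - u) \<le> \<epsilon> * ny u"
    using op_norm_bound[OF Y_subspace Y_norm Xp_subspace Xp_norm into
        lin_on_minus_id[OF projection_lin] projection_error_bounded] .
  show "0 \<le> \<epsilon>"
    using into lin_subspace_zero[OF Y_subspace] is_norm_on_zero[OF Y_norm Y_subspace]
      is_norm_on_nonneg[OF Y_norm] is_norm_on_nonneg[OF Xp_norm]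
    by (intro op_norm_nonneg[OF projection_error_bounded]) (auto simp: maps_into_def)
qed

text \<open>\<open>I - P R A\<close> is the perturbation of the invertible \<open>I - A\<close> by \<open>(I - P R) A\<close>,
  whose norm is at most \<open>\<epsilon> KA\<close>.\<close>

lemma projected_stability:
  assumes e: "e \<in> Xp"
  shows "np e \<le> 2 * KG * np (e - P (R (A e)))"
proof -
  have Ae: "A e \<in> Y" using A_into e by blast
  have res: "e - P (R (A e)) \<in> Xp" and defect: "P (R (A e)) - A e \<in> Xp"
    using lin_subspace_diff[OF Xp_subspace] e projection_into[OF Ae] Ae Y_subset by auto
  have defect_bound: "np (P (R (A e)) - A e) \<le> \<epsilon> * (KA * np e)"
    using projection_consistency Ae A_bound(2) e mult_left_mono[of _ _ \<epsilon>] by (meson order.trans)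
  have "np e = np (G (e - A e))" using G_inverse(1) e by simp
  also have "\<dots> \<le> KG * np (e - A e)"
    using G_bound(2) lin_subspace_diff[OF Xp_subspace e] Ae Y_subset by blast
  also have "\<dots> \<le> KG * (np (e - P (R (A e))) + np (P (R (A e)) - A e))"
    using is_norm_on_triangle[OF Xp_norm res defect] G_bound(1) by (intro mult_left_mono) auto
  also have "\<dots> \<le> KG * (np (e - P (R (A e))) + \<epsilon> * (KA * np e))"
    using defect_bound G_bound(1) by (intro mult_left_mono add_left_mono)
  also have "\<dots> = KG * np (e - P (R (A e))) + (\<epsilon> * (KA * KG)) * np e"
    by (simp add: algebra_simps)
  also have "\<dots> \<le> KG * np (e - P (R (A e))) + 1/2 * np e"
    using stability_margin is_norm_on_nonneg[OF Xp_norm e] by (intro add_left_mono mult_right_mono)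
  finally show ?thesis by simp
qed

lemma projected_kernel_trivial:
  assumes "e \<in> Xp" and "e = P (R (A e))"
  shows "e = 0"
proof -
  have "np e \<le> 0"
    using projected_stability[OF assms(1)] assms(2) is_norm_on_zero[OF Xp_norm Xp_subspace] by simp
  then show ?thesis
    using is_norm_on_nonneg[OF Xp_norm assms(1)] is_norm_on_eq_zero[OF Xp_norm assms(1)] by simp
qed

lemma projected_solution_unique:
  assumes b: "b \<in> Y"
    and w: "w \<in> Xp" "w = P (R (b + A w))" and w': "w' \<in> Xp" "w' = P (R (b + A w'))"
  shows "w = w'"
proof -
  have "P (R (b + A v)) = P (R b) + P (R (A v))" if "v \<in> Xp" for v
    using lin_on_add[OF projection_lin b] A_into that by blast
  moreover have "P (R (A (w - w'))) = P (R (A w)) - P (R (A w'))"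
    using lin_on_diff[OF A_lin Xp_subspace w(1) w'(1)] A_into w(1) w'(1)
      lin_on_diff[OF projection_lin Y_subspace] by simp
  ultimately have "w - w' = P (R (A (w - w')))"
    using w w' by (metis add_diff_cancel_left)
  then have "w - w' = 0"
    using projected_kernel_trivial lin_subspace_diff[OF Xp_subspace w(1) w'(1)] by blast
  then show ?thesis by simp
qed

text \<open>In coordinates \<open>w = P x\<close> the equation reads \<open>x - R (A (P x)) = R b\<close> on the
  finite-dimensional \<open>M\<close>, where injectivity implies surjectivity.\<close>

lemma projected_solution_exists:
  assumes b: "b \<in> Y"
  shows "\<exists>w\<in>Xp. w = P (R (b + A w))"
proof -
  define g where "g x = x - R (A (P x))" for x
  have PXp: "P x \<in> Xp" and RAP: "R (A (P x)) \<in> M" if "x \<in> M" for x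
    using that P_into Y_subset R_into A_into by blast+
  obtain B where B: "finite B" "span B = M" using M_finite_dim(2) by blast
  have "g ` M = M"
  proof (rule linear_on_finite_dim_inj_imp_surj_on[OF B])
    show "\<forall>x\<in>M. g x \<in> M"
      using RAP M_finite_dim(1) by (simp add: g_def subspace_diff)
    show "\<forall>x\<in>M. \<forall>y\<in>M. g (x + y) = g x + g y"
      using PXp A_into P_add R_add lin_on_add[OF A_lin]
      by (simp add: g_def subspace_add[OF M_finite_dim(1)])
    show "\<forall>c. \<forall>x\<in>M. g (c *\<^sub>R x) = c *\<^sub>R g x"
      using PXp A_into P_scale R_scale lin_on_scale[OF A_lin]
      by (simp add: g_def subspace_scale[OF M_finite_dim(1)] scale_right_diff_distrib)
    show "\<forall>x\<in>M. g x = 0 \<longrightarrow> x = 0"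
    proof (intro ballI impI)
      fix x assume x: "x \<in> M" and "g x = 0"
      then have "P x = P (R (A (P x)))" by (simp add: g_def)
      then have "P x = 0" using projected_kernel_trivial PXp[OF x] by blast
      then show "x = 0"
        using R_P x R_scale[rule_format, of 0 0] lin_subspace_zero[OF Y_subspace]
        by (metis fscale_zero_left scale_zero_left)
    qed
  qed
  then obtain x where x: "x \<in> M" "g x = R b"
    using R_into b by (metis imageE)
  have "P (R (b + A (P x))) = P (R b + R (A (P x)))"
    using R_add b A_into PXp[OF x(1)] by simp
  also have "\<dots> = P x" using x(2) unfolding g_def by (metis diff_eq_eq)
  finally show ?thesis using PXp[OF x(1)] by metis
qed

lemma fixed_point_unique:
  assumes "b \<in> Xp"
  shows "\<exists>!z. z \<in> Xp \<and> z = b + A z"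
proof
  show "G b \<in> Xp \<and> G b = b + A (G b)"
    using G_inverse(2) assms by (metis diff_eq_eq)
  show "z = G b" if "z \<in> Xp \<and> z = b + A z" for z
    using G_inverse(1) that by (metis add_diff_cancel_right')
qed

lemma fixed_point_in_Y_norm_le:
  assumes b: "b \<in> Y" and z: "z \<in> Xp" "z = b + A z"
  shows "z \<in> Y" and "ny z \<le> (1 + KA * KG * c1) * ny b"
proof -
  have Az: "A z \<in> Y" using A_into z(1) by blast
  show "z \<in> Y"
    using z(2) lin_subspace_add[OF Y_subspace b Az] by simp
  have "np z = np (G b)"
    using G_inverse(1) z by (metis add_diff_cancel_right')
  also have "\<dots> \<le> KG * np b" using G_bound(2) b Y_subset by blast
  also have "\<dots> \<le> KG * (c1 * ny b)"
    using Y_norm_dominates b G_bound(1) by (intro mult_left_mono) auto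
  finally have npz: "np z \<le> KG * c1 * ny b" by simp
  have "ny z \<le> ny b + ny (A z)"
    using z(2) is_norm_on_triangle[OF Y_norm b Az] by simp
  also have "\<dots> \<le> ny b + KA * np z" using A_bound(2) z(1) by auto
  also have "\<dots> \<le> ny b + KA * (KG * c1 * ny b)"
    using npz A_bound(1) by (intro add_left_mono mult_left_mono)
  finally show "ny z \<le> (1 + KA * KG * c1) * ny b" by (simp add: algebra_simps)
qed

text \<open>The error satisfies \<open>(w - z) - P (R (A (w - z))) = P (R z) - z\<close>, so stability
  turns consistency into convergence.\<close>

lemma projected_solution_error:
  assumes b: "b \<in> Y" and z: "z \<in> Xp" "z = b + A z" and w: "w \<in> Xp" "w = P (R (b + A w))"
  shows "np (w - z) \<le> 2 * KG * \<epsilon> * (1 + KA * KG * c1) * ny b"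
proof -
  have zY: "z \<in> Y" using fixed_point_in_Y_norm_le(1)[OF b z] .
  have e: "w - z \<in> Xp" using lin_subspace_diff[OF Xp_subspace w(1) z(1)] .
  have L_add: "P (R (u + v)) = P (R u) + P (R v)" if "u \<in> Y" "v \<in> Y" for u v
    using lin_on_add[OF projection_lin that] .
  have residual: "(w - z) - P (R (A (w - z))) = P (R z) - z"
  proof -
    have "P (R (A (w - z))) = P (R (A w)) - P (R (A z))"
      using lin_on_diff[OF A_lin Xp_subspace w(1) z(1)] A_into w(1) z(1)
        lin_on_diff[OF projection_lin Y_subspace] by simp
    moreover have "w = P (R b) + P (R (A w))" using w L_add b A_into by simp
    moreover have "P (R z) = P (R b) + P (R (A z))" using L_add b A_into z by metis
    ultimately show ?thesis by (simp add: algebra_simps)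
  qed
  have "np (w - z) \<le> 2 * KG * np (P (R z) - z)"
    using projected_stability[OF e] by (simp only: residual)
  also have "\<dots> \<le> 2 * KG * (\<epsilon> * ny z)"
    using projection_consistency(2) zY G_bound(1) by (intro mult_left_mono) auto
  also have "\<dots> \<le> 2 * KG * (\<epsilon> * ((1 + KA * KG * c1) * ny b))"
    using fixed_point_in_Y_norm_le(2)[OF b z] projection_consistency(1) G_bound(1)
    by (intro mult_left_mono) auto
  finally show ?thesis by (simp add: algebra_simps)
qed

lemma THE_projected_solution_error:
  assumes b: "b \<in> Y" and F: "\<forall>z\<in>Xp. F z = b + A z"
  defines "w \<equiv> THE w. w \<in> Xp \<and> w = P (R (F w))" and "z \<equiv> THE z. z \<in> Xp \<and> z = F z"
  shows "w \<in> Xp" and "z \<in> Xp" and "w - z \<in> Y"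
    and "np (w - z) \<le> 2 * KG * \<epsilon> * (1 + KA * KG * c1) * ny b"
proof -
  have F_z: "(\<lambda>z. z \<in> Xp \<and> z = F z) = (\<lambda>z. z \<in> Xp \<and> z = b + A z)"
    and F_w: "(\<lambda>w. w \<in> Xp \<and> w = P (R (F w))) = (\<lambda>w. w \<in> Xp \<and> w = P (R (b + A w)))"
    using F by auto
  have "\<exists>!z. z \<in> Xp \<and> z = b + A z"
    using fixed_point_unique Y_subset b by blast
  from theI'[OF this] have z: "z \<in> Xp" "z = b + A z"
    unfolding z_def F_z by blast+
  have "\<exists>!w. w \<in> Xp \<and> w = P (R (b + A w))"
    using projected_solution_exists[OF b] projected_solution_unique[OF b] by blast
  from theI'[OF this] have w: "w \<in> Xp" "w = P (R (b + A w))"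
    unfolding w_def F_w by blast+
  show "w \<in> Xp" and "z \<in> Xp" using w(1) z(1) .
  have "w \<in> Y"
    using w(2) projection_into b A_into w(1) lin_subspace_add[OF Y_subspace] by metis
  then show "w - z \<in> Y"
    using lin_subspace_diff[OF Y_subspace] fixed_point_in_Y_norm_le(1)[OF b z] by blast
  show "np (w - z) \<le> 2 * KG * \<epsilon> * (1 + KA * KG * c1) * ny b"
    using projected_solution_error[OF b z w] .
qed

end

section \<open>The delay equation operators\<close>

lemma shift_diff: "shift tau h (u - v) = shift tau h u - shift tau h v"
  by (auto simp: shift_def fun_eq_iff)

context
  fixes X Xp :: "('d::finite) fn set" and V :: "'d fn \<Rightarrow> 'd fn \<Rightarrow> 'd fn"
  assumes X: "lin_subspace X" and Xp: "lin_subspace Xp"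
    and V_add: "\<forall>\<phi>1\<in>X. \<forall>\<phi>2\<in>X. \<forall>z1\<in>Xp. \<forall>z2\<in>Xp.
                  V (fadd \<phi>1 \<phi>2) (fadd z1 z2) = fadd (V \<phi>1 z1) (V \<phi>2 z2)"
begin

lemma V_split: "\<phi> \<in> X \<Longrightarrow> z \<in> Xp \<Longrightarrow> V \<phi> z = V \<phi> 0 + V 0 z"
  using V_add lin_subspace_zero[OF X] lin_subspace_zero[OF Xp]
  by (metis fadd_eq_plus add_0 add.right_neutral)

lemma V_diff_right: "\<phi> \<in> X \<Longrightarrow> z1 \<in> Xp \<Longrightarrow> z2 \<in> Xp \<Longrightarrow> V \<phi> z1 - V \<phi> z2 = V 0 (z1 - z2)"
  using V_add lin_subspace_zero[OF X] lin_subspace_diff[OF Xp]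
  by (metis fadd_eq_plus add.right_neutral add_diff_cancel_left' diff_add_cancel)

lemma Fs_V_split:
  assumes "\<forall>\<phi>\<in>X. \<forall>z\<in>Xp. V \<phi> z \<in> Xpm" and "lin_on Xpm Fs" and "\<phi> \<in> X" and "z \<in> Xp"
  shows "Fs (V \<phi> z) = Fs (V \<phi> 0) + Fs (V 0 z)"
  using V_split[OF assms(3,4)] lin_on_add[OF assms(2)] assms(1,3,4)
    lin_subspace_zero[OF X] lin_subspace_zero[OF Xp] by metis

lemma lin_on_Fs_V_zero:
  assumes "\<forall>\<phi>\<in>X. \<forall>z\<in>Xp. V \<phi> z \<in> Xpm" and "lin_on Xpm Fs"
    and V_scale: "\<forall>c. \<forall>\<phi>\<in>X. \<forall>z\<in>Xp. V (fscale c \<phi>) (fscale c z) = fscale c (V \<phi> z)"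
  shows "lin_on Xp (\<lambda>z. Fs (V 0 z))"
  unfolding lin_on_def
proof (intro conjI ballI allI)
  fix u v assume "u \<in> Xp" "v \<in> Xp"
  then show "Fs (V 0 (fadd u v)) = fadd (Fs (V 0 u)) (Fs (V 0 v))"
    using V_add lin_on_add[OF assms(2)] assms(1) lin_subspace_zero[OF X] by (metis fadd_eq_plus add_0)
next
  fix c u assume "u \<in> Xp"
  then show "Fs (V 0 (fscale c u)) = fscale c (Fs (V 0 u))"
    using V_scale lin_on_scale[OF assms(2)] assms(1) lin_subspace_zero[OF X] by (metis fscale_zero_right)
qed

end

lemma (in projected_fixed_point) opTN_minus_opT:
  assumes X: "lin_subspace X"
    and V_add: "\<forall>\<phi>1\<in>X. \<forall>\<phi>2\<in>X. \<forall>z1\<in>Xp. \<forall>z2\<in>Xp.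
                  V (fadd \<phi>1 \<phi>2) (fadd z1 z2) = fadd (V \<phi>1 z1) (V \<phi>2 z2)"
    and \<phi>: "\<phi> \<in> X" and b: "b \<in> Y" and F: "\<forall>z\<in>Xp. Fs (V \<phi> z) = b + A z"
  obtains e where "e \<in> Y" and "np e \<le> 2 * KG * \<epsilon> * (1 + KA * KG * c1) * ny b"
    and "opTN tau h Xp V Fs (\<lambda>u. P (R u)) \<phi> - opT tau h Xp V Fs \<phi> = shift tau h (V 0 e)"
proof -
  define w where "w = (THE w. w \<in> Xp \<and> w = P (R (Fs (V \<phi> w))))"
  define z where "z = (THE z. z \<in> Xp \<and> z = Fs (V \<phi> z))"
  note wz = THE_projected_solution_error[OF b F, folded w_def z_def]
  have "V \<phi> w - V \<phi> z = V 0 (w - z)"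
    using V_diff_right[OF X Xp_subspace V_add \<phi> wz(1,2)] .
  then have "opTN tau h Xp V Fs (\<lambda>u. P (R u)) \<phi> - opT tau h Xp V Fs \<phi> = shift tau h (V 0 (w - z))"
    unfolding opTN_def opT_def w_def[symmetric] z_def[symmetric] by (metis shift_diff)
  with wz(3,4) show thesis by (rule that)
qed

theorem proposition4p7:
  fixes tau h c1 c2 :: real
    and X Xp Xpm Xt Xhp Xh :: "('d::finite) fn set"
    and nX nXp nXpm nXhp nXh :: "'d fn \<Rightarrow> real"
    and V :: "'d fn \<Rightarrow> 'd fn \<Rightarrow> 'd fn"
    and Fs :: "'d fn \<Rightarrow> 'd fn"
    and XN :: "nat \<Rightarrow> 'n::real_vector set"
    and R :: "nat \<Rightarrow> 'd fn \<Rightarrow> 'n"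
    and P :: "nat \<Rightarrow> 'n \<Rightarrow> 'd fn"
  assumes tau_pos: "tau > 0" and h_ge: "h \<ge> tau"
    and X_sp: "fun_normed_space (-tau) 0 X nX"
    and Xp_sp: "fun_normed_space 0 h Xp nXp"
    and Xpm_sp: "fun_normed_space (-tau) h Xpm nXpm"
    and V_into: "\<forall>\<phi>\<in>X. \<forall>z\<in>Xp. V \<phi> z \<in> Xpm"
    and V_add: "\<forall>\<phi>1\<in>X. \<forall>\<phi>2\<in>X. \<forall>z1\<in>Xp. \<forall>z2\<in>Xp.
                  V (fadd \<phi>1 \<phi>2) (fadd z1 z2) = fadd (V \<phi>1 z1) (V \<phi>2 z2)"
    and V_scale: "\<forall>c. \<forall>\<phi>\<in>X. \<forall>z\<in>Xp. V (fscale c \<phi>) (fscale c z) = fscale c (V \<phi> z)"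
    and V_restr: "\<forall>\<phi>\<in>X. \<forall>z\<in>Xp. \<forall>\<theta>\<in>{-tau..0}. V \<phi> z \<theta> = \<phi> \<theta>"
    and Fs_into: "maps_into Xpm Xp Fs" and Fs_lin: "lin_on Xpm Fs"
    and Xt_sub: "lin_subspace Xt" "Xt \<subseteq> Xp"
    and XN_fd: "\<forall>N. subspace (XN N) \<and> (\<exists>B. finite B \<and> span B = XN N)"
    and R_into: "\<forall>N. maps_into Xt (XN N) (R N)"
    and R_lin: "\<forall>N. (\<forall>u\<in>Xt. \<forall>v\<in>Xt. R N (fadd u v) = R N u + R N v) \<and>
                    (\<forall>c. \<forall>u\<in>Xt. R N (fscale c u) = c *\<^sub>R R N u)"
    and P_into: "\<forall>N. maps_into (XN N) Xp (P N)"
    and P_lin: "\<forall>N. (\<forall>x\<in>XN N. \<forall>y\<in>XN N. P N (x + y) = fadd (P N x) (P N y)) \<and>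
                    (\<forall>c. \<forall>x\<in>XN N. P N (c *\<^sub>R x) = fscale c (P N x))"
    and RP: "\<forall>N. \<forall>x\<in>XN N. R N (P N x) = x"
    and H1_inv: "\<exists>G. maps_into Xp Xp G \<and> bounded_op Xp nXp nXp G \<and>
                    (\<forall>z\<in>Xp. G (fdiff z (Fs (V fzero z))) = z \<and>
                              fdiff (G z) (Fs (V fzero (G z))) = z)"
    and H1_uniq: "\<forall>\<phi>\<in>X. \<exists>!z. z \<in> Xp \<and> z = Fs (V \<phi> z)"
    and Xhp_sp: "lin_subspace Xhp" "Xhp \<subseteq> Xt" "is_norm_on Xhp nXhp" "complete_on Xhp nXhp"
    and H21: "op_norm_to_zero Xhp nXhp nXp (\<lambda>N u. fdiff (P N (R N u)) u)"
    and H22: "\<forall>N. P N ` XN N \<subseteq> Xhp"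
    and H23: "c1 > 0" "\<forall>u\<in>Xhp. nXp u \<le> c1 * nXhp u"
    and H24: "maps_into Xp Xhp (\<lambda>z. Fs (V fzero z))"
             "bounded_op Xp nXp nXhp (\<lambda>z. Fs (V fzero z))"
    and Xh_sp: "lin_subspace Xh" "Xh \<subseteq> X" "is_norm_on Xh nXh" "complete_on Xh nXh"
    and H31: "maps_into Xh Xhp (\<lambda>\<phi>. Fs (V \<phi> fzero))"
             "bounded_op Xh nXh nXhp (\<lambda>\<phi>. Fs (V \<phi> fzero))"
    and H32: "\<forall>\<phi>\<in>Xh. \<forall>z\<in>Xhp. shift tau h (V \<phi> z) \<in> Xh"
    and H33: "c2 > 0" "\<forall>z\<in>Xhp. nXh (shift tau h (V fzero z)) \<le> c2 * nXp z"
  shows "op_norm_to_zero Xh nXh nXh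
           (\<lambda>N \<phi>. fdiff (opTN tau h Xp V Fs (\<lambda>u. P N (R N u)) \<phi>) (opT tau h Xp V Fs \<phi>))"
proof -
  have X: "lin_subspace X" and Xp: "lin_subspace Xp" "is_norm_on Xp nXp"
    using X_sp Xp_sp by (auto simp: fun_normed_space_def)
  have Xhp_Xp: "Xhp \<subseteq> Xp" using Xhp_sp(2) Xt_sub(2) by blast
  have P_into_Xhp: "\<forall>N. \<forall>x\<in>XN N. P N x \<in> Xhp" using H22 by blast
  define A where "A z = Fs (V 0 z)" for z
  define B where "B \<phi> = Fs (V \<phi> 0)" for \<phi>
  define eps where "eps = (\<lambda>N. op_norm Xhp nXhp nXp (\<lambda>u. P N (R N u) - u))"
  obtain KA where KA: "KA \<ge> 0" "\<forall>z\<in>Xp. nXhp (A z) \<le> KA * nXp z"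
    using bounded_op_nonneg_bound[OF H24(2)] is_norm_on_nonneg[OF Xp(2)] A_def by auto
  obtain KB where KB: "KB \<ge> 0" "\<forall>\<phi>\<in>Xh. nXhp (B \<phi>) \<le> KB * nXh \<phi>"
    using bounded_op_nonneg_bound[OF H31(2)] is_norm_on_nonneg[OF Xh_sp(3)] B_def by auto
  obtain G KG where G: "\<forall>z\<in>Xp. G z \<in> Xp \<and> G (z - A z) = z \<and> G z - A (G z) = z"
    and KG: "KG \<ge> 0" "\<forall>y\<in>Xp. nXp (G y) \<le> KG * nXp y"
    using H1_inv bounded_op_nonneg_bound is_norm_on_nonneg[OF Xp(2)] unfolding A_def maps_into_def
    by (metis fdiff_eq_minus fzero_eq_zero)
  have eps_lim: "eps \<longlonglongrightarrow> 0"
    using H21 by (simp add: op_norm_to_zero_def eps_def)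
  obtain N0 where N0: "bounded_op Xhp nXhp nXp (\<lambda>u. P N (R N u) - u)" "eps N * (KA * KG) \<le> 1/2"
    if "N \<ge> N0" for N
    using op_norm_to_zero_eventually_small[OF H21[unfolded fdiff_eq_minus], of "1/2" "KA * KG"]
    unfolding eventually_sequentially eps_def by auto
  have setting: "projected_fixed_point Xp nXp Xhp nXhp A G (XN N) (R N) (P N) c1 KA KG"
    if "N \<ge> N0" for N
  proof
    show "lin_on Xp A"
      unfolding A_def using lin_on_Fs_V_zero[OF X Xp(1) V_add V_into Fs_lin V_scale] .
  qed (use Xp Xhp_sp Xhp_Xp H23 H24(1) KA KG G XN_fd R_into R_lin P_lin P_into_Xhp RP N0[OF that] in
        \<open>auto simp: A_def eps_def maps_into_def subset_iff\<close>)
  have eps_nonneg: "0 \<le> eps N" if "N \<ge> N0" for N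
    using projected_fixed_point.projection_consistency(1)[OF setting[OF that]] by (simp add: eps_def)
  define C where "C = 2 * c2 * KG * (1 + KA * KG * c1) * KB"
  have C: "C \<ge> 0" using KA(1) KB(1) KG(1) H23(1) H33(1) by (simp add: C_def)
  let ?D = "\<lambda>N \<phi>. opTN tau h Xp V Fs (\<lambda>u. P N (R N u)) \<phi> - opT tau h Xp V Fs \<phi>"
  have error: "?D N \<phi> \<in> Xh \<and> nXh (?D N \<phi>) \<le> C * eps N * nXh \<phi>"
    if N: "N \<ge> N0" and \<phi>: "\<phi> \<in> Xh" for N \<phi>
  proof -
    interpret projected_fixed_point Xp nXp Xhp nXhp A G "XN N" "R N" "P N" c1 KA KG
      using setting[OF N] .
    have b: "B \<phi> \<in> Xhp" using H31(1) \<phi> by (simp add: maps_into_def B_def)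
    have F: "\<forall>z\<in>Xp. Fs (V \<phi> z) = B \<phi> + A z"
      using Fs_V_split[OF X Xp(1) V_add V_into Fs_lin] Xh_sp(2) \<phi> by (auto simp: A_def B_def)
    obtain e where e: "e \<in> Xhp" "nXp e \<le> 2 * KG * eps N * (1 + KA * KG * c1) * nXhp (B \<phi>)"
      and D: "?D N \<phi> = shift tau h (V 0 e)"
      using opTN_minus_opT[OF X V_add _ b F] Xh_sp(2) \<phi> unfolding eps_def by blast
    have "nXh (?D N \<phi>) \<le> c2 * nXp e" using H33(2) e(1) D by simp
    also have "\<dots> \<le> c2 * (2 * KG * eps N * (1 + KA * KG * c1) * nXhp (B \<phi>))"
      using e(2) H33(1) by (intro mult_left_mono) auto
    also have "\<dots> \<le> c2 * (2 * KG * eps N * (1 + KA * KG * c1) * (KB * nXh \<phi>))"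
      using KB(2) \<phi> KA(1) KG(1) H23(1) H33(1) eps_nonneg[OF N] by (intro mult_left_mono) auto
    also have "\<dots> = C * eps N * nXh \<phi>" by (simp add: C_def algebra_simps)
    finally show ?thesis using H32 e(1) D lin_subspace_zero[OF Xh_sp(1)] by simp
  qed
  show ?thesis
    unfolding fdiff_eq_minus
    using error eps_nonneg C
    by (intro op_norm_to_zeroI[OF Xh_sp(1,3) Xh_sp(3) tendsto_mult_right_zero[OF eps_lim], of N0]) auto
qed

end
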